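(* Let $n\ge 2$ be an integer and let $(x_0,y_0),\dots,(x_n,y_n)\in\mathbb{R}^2$ with $a:=x_0<x_1<\dots<x_n=:b$. For each $k\in\{1,\dots,n\}$ fix $d_k\in[0,1)$ and put \[ a_k=\frac{x_k-x_{k-1}}{x_n-x_0},\quad b_k=\frac{x_nx_{k-1}-x_0x_k}{x_n-x_0},\quad c_k=\frac{y_k-y_{k-1}}{x_n-x_0}-d_k\frac{y_n-y_0}{x_n-x_0},\quad e_k=\frac{x_ny_{k-1}-x_0y_k}{x_n-x_0}-d_k\frac{x_ny_0-x_0y_n}{x_n-x_0}, \] and $f_k(x,y)=(a_kx+b_k,\;c_kx+d_ky+e_k)$. Let $\theta=1$ if $c_1=\dots=c_n=0$ and $\theta=\dfrac{1-\max_k a_k}{2\max_k|c_k|}$ otherwise. Let $f:[a,b]\to\mathbb{R}$ be the affine fractal interpolation function associated with these data and $G_f=\{(x,f(x)):x\in[a,b]\}$. For $k\in\{1,\dots,n\}$ set \[ u_k=\frac{b_k}{1-a_k},\qquad v_k=\frac{b_kc_k}{(1-a_k)(1-d_k)}+\frac{e_k}{1-d_k},\qquad s_k=\max\{a_k+\theta|c_k|,\,d_k\}, \] and $M=\max_{i,j\in\{1,\dots,n\}}\left(|u_i-u_j|+\theta|v_i-v_j|\right)$. Let $\sigma$ be a permutation of $\{1,\dots,n\}$ with $s_{\sigma(1)}\le\dots\le s_{\sigma(n)}$, and let $D=1-s_{\sigma(n-1)}s_{\sigma(n)}$. Define \[ A=\min\left\{\min_{1\le j\le n-1}\left(v_{\sigma(j)}-\frac{Ms_{\sigma(j)}(1+s_{\sigma(n)})}{\theta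 D}\right),\ v_{\sigma(n)}-\frac{Ms_{\sigma(n)}(1+s_{\sigma(n-1)})}{\theta D}\right\}, \] \[ B=\max\left\{\max_{1\le j\le n-1}\left(v_{\sigma(j)}+\frac{Ms_{\sigma(j)}(1+s_{\sigma(n)})}{\theta D}\right),\ v_{\sigma(n)}+\frac{Ms_{\sigma(n)}(1+s_{\sigma(n-1)})}{\theta D}\right\}. \] Then $G_f\subseteq[a,b]\times[A,B]$.
   Context: The maps $f_k$ are contractions for the metric $\rho((u_1,v_1),(u_2,v_2))=|u_1-u_2|+\theta|v_1-v_2|$ on $\mathbb{R}^2$, and the attractor of the iterated function system $\{f_1,\dots,f_n\}$ is the unique nonempty compact set $K\subseteq\mathbb{R}^2$ with $K=\bigcup_{k=1}^n f_k(K)$. The affine fractal interpolation function is the continuous function $f:[a,b]\to\mathbb{R}$ with $f(x_k)=y_k$ for all $k\in\{0,\dots,n\}$ whose graph equals this attractor. *)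

theory Defs
  imports "HOL-Analysis.Analysis" "HOL-Combinatorics.Permutations"
begin

definition fif_a :: "(nat \<Rightarrow> real) \<Rightarrow> nat \<Rightarrow> nat \<Rightarrow> real" where
  "fif_a x n k = (x k - x (k - 1)) / (x n - x 0)"

definition fif_b :: "(nat \<Rightarrow> real) \<Rightarrow> nat \<Rightarrow> nat \<Rightarrow> real" where
  "fif_b x n k = (x n * x (k - 1) - x 0 * x k) / (x n - x 0)"

definition fif_c :: "(nat \<Rightarrow> real) \<Rightarrow> (nat \<Rightarrow> real) \<Rightarrow> (nat \<Rightarrow> real) \<Rightarrow> nat \<Rightarrow> nat \<Rightarrow> real" where
  "fif_c x y d n k = (y k - y (k - 1)) / (x n - x 0) - d k * (y n - y 0) / (x n - x 0)"

definition fif_e :: "(nat \<Rightarrow> real) \<Rightarrow> (nat \<Rightarrow> real) \<Rightarrow> (nat \<Rightarrow> real) \<Rightarrow> nat \<Rightarrow> nat \<Rightarrow> real" where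
  "fif_e x y d n k = (x n * y (k - 1) - x 0 * y k) / (x n - x 0)
                     - d k * (x n * y 0 - x 0 * y n) / (x n - x 0)"

definition fif_map :: "(nat \<Rightarrow> real) \<Rightarrow> (nat \<Rightarrow> real) \<Rightarrow> (nat \<Rightarrow> real) \<Rightarrow> nat \<Rightarrow> nat
    \<Rightarrow> real \<times> real \<Rightarrow> real \<times> real" where
  "fif_map x y d n k = (\<lambda>(u, v). (fif_a x n k * u + fif_b x n k,
                                  fif_c x y d n k * u + d k * v + fif_e x y d n k))"

definition fif_theta :: "(nat \<Rightarrow> real) \<Rightarrow> (nat \<Rightarrow> real) \<Rightarrow> (nat \<Rightarrow> real) \<Rightarrow> nat \<Rightarrow> real" where
  "fif_theta x y d n =
     (if (\<forall>k\<in>{1..n}. fif_c x y d n k = 0) then 1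
      else (1 - Max ((\<lambda>k. fif_a x n k) ` {1..n})) / (2 * Max ((\<lambda>k. \<bar>fif_c x y d n k\<bar>) ` {1..n})))"

text \<open>Attractor of the IFS {F 1, ..., F n}: the unique nonempty compact set K with
  K = F 1 (K) \<union> ... \<union> F n (K) (uniqueness holds since the maps are contractions).\<close>
definition is_ifs_attractor :: "nat \<Rightarrow> (nat \<Rightarrow> real \<times> real \<Rightarrow> real \<times> real) \<Rightarrow> (real \<times> real) set \<Rightarrow> bool" where
  "is_ifs_attractor n F K \<longleftrightarrow> K \<noteq> {} \<and> compact K \<and> K = (\<Union>k\<in>{1..n}. F k ` K)"

definition is_affine_fif :: "nat \<Rightarrow> (nat \<Rightarrow> real) \<Rightarrow> (nat \<Rightarrow> real) \<Rightarrow> (nat \<Rightarrow> real)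
    \<Rightarrow> (real \<Rightarrow> real) \<Rightarrow> bool" where
  "is_affine_fif n x y d f \<longleftrightarrow>
     continuous_on {x 0..x n} f \<and> (\<forall>k\<le>n. f (x k) = y k) \<and>
     is_ifs_attractor n (fif_map x y d n) {(t, f t) | t. t \<in> {x 0..x n}}"

end

theory Submission
  imports Defs
begin

text \<open>Let \<open>P\<^sub>k = (u\<^sub>k, v\<^sub>k)\<close> be the fixed point of \<open>f\<^sub>k\<close> and \<open>R\<^sub>k\<close> the \<open>\<rho>\<close>-radius of the
  attractor \<open>K\<close> about \<open>P\<^sub>k\<close>. Every point of \<open>K\<close> is \<open>f\<^sub>j q\<close> with \<open>q \<in> K\<close>, so by the triangle
  inequality through \<open>P\<^sub>j\<close> either \<open>R\<^sub>k \<le> s\<^sub>k R\<^sub>k\<close> (when \<open>j = k\<close>) or \<open>R\<^sub>k \<le> s\<^sub>j R\<^sub>j + M\<close>.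
  Put \<open>m = \<sigma> n\<close>, \<open>S = s\<^sub>m\<close>, \<open>T = s (\<sigma> (n - 1))\<close> and let \<open>X\<close> be the largest \<open>R\<^sub>k\<close> with
  \<open>k \<noteq> m\<close>. Then \<open>R\<^sub>m \<le> T X + M\<close> and \<open>X \<le> max (T X + M) (S R\<^sub>m + M)\<close>, which gives
  \<open>X \<le> M (1 + S) / (1 - T S)\<close> and \<open>R\<^sub>m \<le> M (1 + T) / (1 - T S)\<close>. One more contraction step
  bounds \<open>\<theta> \<bar>f t - v\<^sub>k\<bar> \<le> \<rho> ((t, f t), P\<^sub>k) \<le> s\<^sub>k R\<^sub>k\<close> for a suitable \<open>k\<close>.\<close>

lemma radii_bound_from_recursion:
  fixes S T M X R :: real
  assumes "0 \<le> T" "T \<le> S" "S < 1" "0 \<le> M" "0 \<le> X" "0 \<le> R"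
    and R_rec: "R \<le> max (S * R) (T * X + M)"
    and X_rec: "X \<le> max (S * R + M) (T * X + M)"
  shows "X \<le> M * (1 + S) / (1 - T * S)" and "R \<le> M * (1 + T) / (1 - T * S)"
proof -
  have D_pos: "0 < 1 - T * S"
    using mult_right_mono[of T 1 S] assms(1-3) by linarith
  have R_le: "R \<le> T * X + M"
  proof (rule ccontr)
    assume "\<not> ?thesis"
    then have "R \<le> S * R" using R_rec by linarith
    then have "R * (1 - S) \<le> 0" by (simp add: algebra_simps)
    then have "R \<le> 0" using \<open>S < 1\<close> by (simp add: mult_le_0_iff)
    with \<open>\<not> ?thesis\<close> mult_nonneg_nonneg[OF \<open>0 \<le> T\<close> \<open>0 \<le> X\<close>] \<open>0 \<le> M\<close>
    show False by linarith
  qed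
  have "X * (1 - T * S) \<le> M * (1 + S)"
  proof (cases "X \<le> T * X + M")
    case True
    have "X * (1 - T * S) = X * (1 - T) * (1 + S) - X * (S - T)"
      by (simp add: algebra_simps)
    also have "\<dots> \<le> X * (1 - T) * (1 + S)"
      using assms by simp
    also have "\<dots> \<le> M * (1 + S)"
      using True assms by (intro mult_right_mono) (auto simp: algebra_simps)
    finally show ?thesis .
  next
    case False
    then have "X \<le> S * R + M" using X_rec by linarith
    also have "\<dots> \<le> S * (T * X + M) + M"
      using R_le assms by (simp add: mult_left_mono)
    finally show ?thesis by (simp add: algebra_simps)
  qed
  then show X_le: "X \<le> M * (1 + S) / (1 - T * S)"
    using D_pos by (simp add: pos_le_divide_eq)
  have "R \<le> T * (M * (1 + S) / (1 - T * S)) + M"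
    using R_le mult_left_mono[OF X_le \<open>0 \<le> T\<close>] by linarith
  also have "\<dots> = M * (1 + T) / (1 - T * S)"
    using D_pos by (simp add: field_simps)
  finally show "R \<le> M * (1 + T) / (1 - T * S)" .
qed

locale ifs_fixed_points =
  fixes I :: "'i set" and F :: "'i \<Rightarrow> 'a \<Rightarrow> 'a" and K :: "'a set"
    and \<rho> :: "'a \<Rightarrow> 'a \<Rightarrow> real" and s :: "'i \<Rightarrow> real" and P :: "'i \<Rightarrow> 'a" and M :: real
  assumes finite_index: "finite I"
    and nonempty: "K \<noteq> {}"
    and covered: "K \<subseteq> (\<Union>k\<in>I. F k ` K)"
    and triangle: "\<rho> p r \<le> \<rho> p q + \<rho> q r"
    and dist_nonneg: "0 \<le> \<rho> p q"
    and lipschitz: "k \<in> I \<Longrightarrow> \<rho> (F k p) (F k q) \<le> s k * \<rho> p q"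
    and ratio_nonneg: "k \<in> I \<Longrightarrow> 0 \<le> s k"
    and fixed_point: "k \<in> I \<Longrightarrow> F k (P k) = P k"
    and fixed_points_dist_le: "i \<in> I \<Longrightarrow> j \<in> I \<Longrightarrow> \<rho> (P i) (P j) \<le> M"
    and bounded: "k \<in> I \<Longrightarrow> bdd_above ((\<lambda>q. \<rho> q (P k)) ` K)"
begin

definition radius :: "'i \<Rightarrow> real" where
  "radius k = (SUP q\<in>K. \<rho> q (P k))"

lemma dist_le_radius: "k \<in> I \<Longrightarrow> q \<in> K \<Longrightarrow> \<rho> q (P k) \<le> radius k"
  unfolding radius_def using bounded by (intro cSUP_upper) auto

lemma radius_le: "(\<And>q. q \<in> K \<Longrightarrow> \<rho> q (P k) \<le> z) \<Longrightarrow> radius k \<le> z"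
  unfolding radius_def using nonempty by (intro cSUP_least) auto

lemma radius_nonneg: "k \<in> I \<Longrightarrow> 0 \<le> radius k"
  using nonempty dist_le_radius dist_nonneg by (meson ex_in_conv order_trans)

lemma image_dist_fixed_point_le:
  assumes "j \<in> I" "q \<in> K"
  shows "\<rho> (F j q) (P j) \<le> s j * radius j"
proof -
  have "\<rho> (F j q) (P j) = \<rho> (F j q) (F j (P j))" using fixed_point assms by simp
  also have "\<dots> \<le> s j * \<rho> q (P j)" using lipschitz assms by simp
  also have "\<dots> \<le> s j * radius j"
    using assms ratio_nonneg dist_le_radius by (simp add: mult_left_mono)
  finally show ?thesis .
qed

lemma dist_fixed_point_recursion:
  assumes "k \<in> I" "q \<in> K"
  obtains j where "j \<in> I" "\<rho> q (P k) \<le> s j * radius j + (if j = k then 0 else M)"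
proof -
  obtain j q' where j: "j \<in> I" "q' \<in> K" "q = F j q'"
    using covered assms by blast
  have "\<rho> q (P k) \<le> \<rho> q (P j) + \<rho> (P j) (P k)" by (rule triangle)
  then have "\<rho> q (P k) \<le> s j * radius j + (if j = k then 0 else M)"
    using image_dist_fixed_point_le[of j q'] fixed_points_dist_le[of j k] j assms
    by (auto split: if_splits)
  with j that show ?thesis by blast
qed

lemma radius_bound:
  assumes m: "m \<in> I" and T: "0 \<le> T" "T \<le> s m" "s m < 1"
    and others_le: "\<And>j. j \<in> I \<Longrightarrow> j \<noteq> m \<Longrightarrow> s j \<le> T"
    and k: "k \<in> I"
  shows "radius k \<le> M * (1 + (if k = m then T else s m)) / (1 - T * s m)"
proof -
  define X where "X = Max (insert 0 (radius ` (I - {m})))"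
    \<comment> \<open>the \<open>0\<close> keeps \<open>X\<close> meaningful when \<open>I = {m}\<close>\<close>
  have M_nonneg: "0 \<le> M" using fixed_points_dist_le[OF m m] dist_nonneg order_trans by blast
  have X_ge: "radius j \<le> X" if "j \<in> I - {m}" for j
    unfolding X_def using finite_index that by simp
  have X_nonneg: "0 \<le> X" unfolding X_def using finite_index by simp
  have rec: "radius i \<le> max (s m * radius m + (if i = m then 0 else M)) (T * X + M)"
    if i: "i \<in> I" for i
  proof (rule radius_le)
    fix q assume "q \<in> K"
    then obtain j where j: "j \<in> I" "\<rho> q (P i) \<le> s j * radius j + (if j = i then 0 else M)"
      using dist_fixed_point_recursion[OF i] by blast
    show "\<rho> q (P i) \<le> max (s m * radius m + (if i = m then 0 else M)) (T * X + M)"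
    proof (cases "j = m")
      case False
      then have "s j * radius j \<le> T * X"
        using j X_ge others_le ratio_nonneg radius_nonneg T by (intro mult_mono) auto
      then show ?thesis using j M_nonneg by (auto split: if_splits)
    qed (use j in auto)
  qed
  have X_rec: "X \<le> max (s m * radius m + M) (T * X + M)"
  proof -
    have "X \<in> insert 0 (radius ` (I - {m}))"
      unfolding X_def using finite_index by (intro Max_in) auto
    then consider "X = 0" | j where "j \<in> I" "j \<noteq> m" "X = radius j" by blast
    then show ?thesis
    proof cases
      case 2
      then show ?thesis using rec[of j] by simp
    qed (use M_nonneg radius_nonneg[OF m] T in auto)
  qed
  have R_rec: "radius m \<le> max (s m * radius m) (T * X + M)"
    using rec[OF m] by simp
  note radii = radii_bound_from_recursion[OF T M_nonneg X_nonneg radius_nonneg[OF m] R_rec X_rec]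
  show ?thesis
  proof (cases "k = m")
    case True
    then show ?thesis using radii(2) by simp
  next
    case False
    then show ?thesis using radii(1) X_ge[of k] k by simp
  qed
qed

lemma covered_dist_fixed_point_bound:
  assumes "m \<in> I" "0 \<le> T" "T \<le> s m" "s m < 1"
    and "\<And>j. j \<in> I \<Longrightarrow> j \<noteq> m \<Longrightarrow> s j \<le> T"
    and "p \<in> K"
  obtains k where "k \<in> I"
    and "\<rho> p (P k) \<le> s k * (M * (1 + (if k = m then T else s m)) / (1 - T * s m))"
proof -
  obtain k q where k: "k \<in> I" "q \<in> K" "p = F k q"
    using covered \<open>p \<in> K\<close> by blast
  have "\<rho> p (P k) \<le> s k * radius k"
    using image_dist_fixed_point_le k by simp
  also have "\<dots> \<le> s k * (M * (1 + (if k = m then T else s m)) / (1 - T * s m))"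
    using radius_bound[OF assms(1-5) k(1)] ratio_nonneg k by (intro mult_left_mono) auto
  finally show ?thesis using that k by blast
qed

end

lemma fif_a_bounds:
  assumes xinc: "\<And>k. k < n \<Longrightarrow> x k < x (Suc k)" and "n \<ge> 2" and k: "k \<in> {1..n}"
  shows "0 < fif_a x n k" and "fif_a x n k < 1"
proof -
  have x_less: "x i < x j" if "i < j" "j \<le> n" for i j
  proof (rule lift_Suc_mono_less_ivl[where N = "{..<n}"])
    show "x l < x (Suc l)" if "l \<in> {..<n}" for l using xinc that by simp
  qed (use that in auto)
  have "x (k - 1) < x k" using k x_less[of "k - 1" k] by auto
  moreover have "x k - x (k - 1) < x n - x 0"
  proof (cases "k = 1")
    case True
    then show ?thesis using x_less[of 1 n] \<open>n \<ge> 2\<close> by auto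
  next
    case False
    then have "x 0 < x (k - 1)" using x_less[of 0 "k - 1"] k by auto
    moreover have "x k \<le> x n" using x_less[of k n] k by (cases "k = n") auto
    ultimately show ?thesis by linarith
  qed
  moreover have "0 < x n - x 0" using x_less[of 0 n] \<open>n \<ge> 2\<close> by simp
  ultimately show "0 < fif_a x n k" "fif_a x n k < 1"
    unfolding fif_a_def by (auto simp: divide_simps)
qed

lemma fif_theta_pos_contraction:
  assumes a_less: "\<And>k. k \<in> {1..n} \<Longrightarrow> fif_a x n k < 1" and "n \<ge> 1"
  shows "0 < fif_theta x y d n"
    and "k \<in> {1..n} \<Longrightarrow> fif_a x n k + fif_theta x y d n * \<bar>fif_c x y d n k\<bar> < 1"
proof -
  have "0 < fif_theta x y d n \<and>
      (\<forall>k\<in>{1..n}. fif_a x n k + fif_theta x y d n * \<bar>fif_c x y d n k\<bar> < 1)"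
  proof (cases "\<forall>k\<in>{1..n}. fif_c x y d n k = 0")
    case True
    then show ?thesis using a_less by (simp add: fif_theta_def)
  next
    case False
    define MA where "MA = Max (fif_a x n ` {1..n})"
    define MC where "MC = Max ((\<lambda>k. \<bar>fif_c x y d n k\<bar>) ` {1..n})"
    have theta: "fif_theta x y d n = (1 - MA) / (2 * MC)"
      unfolding fif_theta_def MA_def MC_def by (simp only: if_not_P[OF False])
    have "MA \<in> fif_a x n ` {1..n}" unfolding MA_def using \<open>n \<ge> 1\<close> by (intro Max_in) auto
    then have MA_less: "MA < 1" using a_less by auto
    obtain k0 where k0: "k0 \<in> {1..n}" "fif_c x y d n k0 \<noteq> 0" using False by auto
    have "\<bar>fif_c x y d n k0\<bar> \<le> MC" unfolding MC_def using k0 by simp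
    with k0 have MC_pos: "0 < MC" by linarith
    have theta_pos: "0 < fif_theta x y d n" unfolding theta using MA_less MC_pos by simp
    have "fif_a x n k + fif_theta x y d n * \<bar>fif_c x y d n k\<bar> < 1" if k: "k \<in> {1..n}" for k
    proof -
      have "fif_theta x y d n * \<bar>fif_c x y d n k\<bar> \<le> fif_theta x y d n * MC"
        using theta_pos k unfolding MC_def by (intro mult_left_mono) auto
      also have "\<dots> = (1 - MA) / 2" unfolding theta using MC_pos by simp
      finally have "fif_theta x y d n * \<bar>fif_c x y d n k\<bar> \<le> (1 - MA) / 2" .
      moreover have "fif_a x n k \<le> MA" unfolding MA_def using k by simp
      ultimately show ?thesis using MA_less by (simp add: field_simps)
    qed
    with theta_pos show ?thesis by blast
  qed
  then show "0 < fif_theta x y d n"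
    and "k \<in> {1..n} \<Longrightarrow> fif_a x n k + fif_theta x y d n * \<bar>fif_c x y d n k\<bar> < 1"
    by auto
qed

definition fif_rho :: "real \<Rightarrow> real \<times> real \<Rightarrow> real \<times> real \<Rightarrow> real" where
  "fif_rho \<theta> p q = \<bar>fst p - fst q\<bar> + \<theta> * \<bar>snd p - snd q\<bar>"

definition fif_u :: "(nat \<Rightarrow> real) \<Rightarrow> nat \<Rightarrow> nat \<Rightarrow> real" where
  "fif_u x n k = fif_b x n k / (1 - fif_a x n k)"

definition fif_v :: "(nat \<Rightarrow> real) \<Rightarrow> (nat \<Rightarrow> real) \<Rightarrow> (nat \<Rightarrow> real) \<Rightarrow> nat \<Rightarrow> nat \<Rightarrow> real" where
  "fif_v x y d n k = fif_b x n k * fif_c x y d n k / ((1 - fif_a x n k) * (1 - d k))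
                     + fif_e x y d n k / (1 - d k)"

definition fif_M :: "(nat \<Rightarrow> real) \<Rightarrow> (nat \<Rightarrow> real) \<Rightarrow> (nat \<Rightarrow> real) \<Rightarrow> nat \<Rightarrow> real" where
  "fif_M x y d n = Max ((\<lambda>(i, j). \<bar>fif_u x n i - fif_u x n j\<bar>
                          + fif_theta x y d n * \<bar>fif_v x y d n i - fif_v x y d n j\<bar>)
                        ` ({1..n} \<times> {1..n}))"

definition fif_s :: "(nat \<Rightarrow> real) \<Rightarrow> (nat \<Rightarrow> real) \<Rightarrow> (nat \<Rightarrow> real) \<Rightarrow> nat \<Rightarrow> nat \<Rightarrow> real" where
  "fif_s x y d n k = max (fif_a x n k + fif_theta x y d n * \<bar>fif_c x y d n k\<bar>) (d k)"

lemma fif_rho_triangle: "0 \<le> \<theta> \<Longrightarrow> fif_rho \<theta> p r \<le> fif_rho \<theta> p q + fif_rho \<theta> q r"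
  unfolding fif_rho_def
  using mult_left_mono[OF abs_triangle_ineq[of "snd p - snd q" "snd q - snd r"], of \<theta>]
  by (simp add: algebra_simps)

lemma fif_rho_nonneg: "0 \<le> \<theta> \<Longrightarrow> 0 \<le> fif_rho \<theta> p q"
  unfolding fif_rho_def by simp

lemma fif_rho_bdd_above:
  assumes "compact K"
  shows "bdd_above ((\<lambda>q. fif_rho \<theta> q p) ` K)"
proof -
  have "continuous_on K (\<lambda>q. fif_rho \<theta> q p)"
    unfolding fif_rho_def by (intro continuous_intros)
  then show ?thesis
    using assms by (intro bounded_imp_bdd_above compact_imp_bounded compact_continuous_image)
qed

lemma fif_map_lipschitz:
  assumes "0 \<le> fif_a x n k" "0 \<le> d k" "0 \<le> \<theta>"
  shows "fif_rho \<theta> (fif_map x y d n k p) (fif_map x y d n k q)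
    \<le> max (fif_a x n k + \<theta> * \<bar>fif_c x y d n k\<bar>) (d k) * fif_rho \<theta> p q"
proof -
  let ?a = "fif_a x n k" and ?c = "fif_c x y d n k" and ?F = "fif_map x y d n k"
  obtain p1 p2 q1 q2 where pq: "p = (p1, p2)" "q = (q1, q2)" by fastforce
  have "fst (?F p) - fst (?F q) = ?a * (p1 - q1)"
    by (simp add: fif_map_def pq algebra_simps)
  then have horiz: "\<bar>fst (?F p) - fst (?F q)\<bar> = ?a * \<bar>p1 - q1\<bar>"
    using assms by (simp add: abs_mult)
  have "snd (?F p) - snd (?F q) = ?c * (p1 - q1) + d k * (p2 - q2)"
    by (simp add: fif_map_def pq algebra_simps)
  then have vert: "\<bar>snd (?F p) - snd (?F q)\<bar> \<le> \<bar>?c\<bar> * \<bar>p1 - q1\<bar> + d k * \<bar>p2 - q2\<bar>"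
    using abs_triangle_ineq[of "?c * (p1 - q1)" "d k * (p2 - q2)"] assms by (simp add: abs_mult)
  have "fif_rho \<theta> (?F p) (?F q) \<le> ?a * \<bar>p1 - q1\<bar> + \<theta> * (\<bar>?c\<bar> * \<bar>p1 - q1\<bar> + d k * \<bar>p2 - q2\<bar>)"
    unfolding fif_rho_def horiz using mult_left_mono[OF vert \<open>0 \<le> \<theta>\<close>] by simp
  also have "\<dots> = (?a + \<theta> * \<bar>?c\<bar>) * \<bar>p1 - q1\<bar> + d k * (\<theta> * \<bar>p2 - q2\<bar>)"
    by (simp add: algebra_simps)
  also have "\<dots> \<le> max (?a + \<theta> * \<bar>?c\<bar>) (d k) * fif_rho \<theta> p q"
    unfolding fif_rho_def pq using assms
    by (simp add: distrib_left add_mono mult_right_mono)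
  finally show ?thesis .
qed

lemma fif_map_fixed_point:
  assumes "fif_a x n k \<noteq> 1" "d k \<noteq> 1"
  shows "fif_map x y d n k (fif_u x n k, fif_v x y d n k) = (fif_u x n k, fif_v x y d n k)"
proof -
  let ?u = "fif_u x n k" and ?v = "fif_v x y d n k"
  have "?v = (fif_c x y d n k * ?u + fif_e x y d n k) / (1 - d k)"
    unfolding fif_v_def fif_u_def by (simp add: add_divide_distrib mult.commute)
  then have "(1 - d k) * ?v = fif_c x y d n k * ?u + fif_e x y d n k"
    using assms by simp
  then have "fif_c x y d n k * ?u + d k * ?v + fif_e x y d n k = ?v"
    by (simp add: algebra_simps)
  moreover have "fif_a x n k * ?u + fif_b x n k = ?u"
    using assms by (simp add: fif_u_def field_simps)
  ultimately show ?thesis by (simp add: fif_map_def)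
qed

lemma fif_s_bounds:
  assumes xinc: "\<And>k. k < n \<Longrightarrow> x k < x (Suc k)" and "n \<ge> 2"
    and drange: "\<And>k. k \<in> {1..n} \<Longrightarrow> 0 \<le> d k \<and> d k < 1" and k: "k \<in> {1..n}"
  shows "0 \<le> fif_s x y d n k" and "fif_s x y d n k < 1"
  using fif_theta_pos_contraction(2)[OF fif_a_bounds(2)[where x = x and n = n, OF xinc \<open>n \<ge> 2\<close>]] drange[OF k] k \<open>n \<ge> 2\<close>
  unfolding fif_s_def by auto

lemma fif_ifs_fixed_points:
  assumes xinc: "\<And>k. k < n \<Longrightarrow> x k < x (Suc k)" and "n \<ge> 2"
    and drange: "\<And>k. k \<in> {1..n} \<Longrightarrow> 0 \<le> d k \<and> d k < 1"
    and fif: "is_affine_fif n x y d f"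
  shows "ifs_fixed_points {1..n} (fif_map x y d n) {(t, f t) | t. t \<in> {x 0..x n}}
    (fif_rho (fif_theta x y d n)) (fif_s x y d n) (\<lambda>k. (fif_u x n k, fif_v x y d n k))
    (fif_M x y d n)"
proof -
  let ?\<theta> = "fif_theta x y d n"
  have attractor: "is_ifs_attractor n (fif_map x y d n) {(t, f t) | t. t \<in> {x 0..x n}}"
    using fif unfolding is_affine_fif_def by blast
  have a_bounds: "0 < fif_a x n k" "fif_a x n k < 1" if "k \<in> {1..n}" for k
    using fif_a_bounds[where x = x and n = n, OF xinc \<open>n \<ge> 2\<close> that] by auto
  have \<theta>_pos: "0 < ?\<theta>"
    using fif_theta_pos_contraction(1)[OF a_bounds(2)] \<open>n \<ge> 2\<close> by simp
  show ?thesis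
  proof
    show "fif_rho ?\<theta> (fif_map x y d n k p) (fif_map x y d n k q) \<le> fif_s x y d n k * fif_rho ?\<theta> p q"
      if "k \<in> {1..n}" for k p q
      using fif_map_lipschitz[of x n k d ?\<theta>] a_bounds[OF that] drange[OF that] \<theta>_pos
      unfolding fif_s_def by simp
    show "fif_map x y d n k (fif_u x n k, fif_v x y d n k) = (fif_u x n k, fif_v x y d n k)"
      if "k \<in> {1..n}" for k
      using fif_map_fixed_point a_bounds[OF that] drange[OF that] by force
    show "fif_rho ?\<theta> (fif_u x n i, fif_v x y d n i) (fif_u x n j, fif_v x y d n j) \<le> fif_M x y d n"
      if "i \<in> {1..n}" "j \<in> {1..n}" for i j
      using that unfolding fif_rho_def fif_M_def by (intro Max_ge) force+
  qed (use attractor \<theta>_pos fif_rho_triangle fif_rho_nonneg fif_rho_bdd_above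
         fif_s_bounds(1)[where x = x and y = y and d = d and n = n, OF xinc \<open>n \<ge> 2\<close> drange] in \<open>auto simp: is_ifs_attractor_def\<close>)
qed

lemma permutes_sorted_le_second_largest:
  fixes \<sigma> :: "nat \<Rightarrow> nat" and g :: "nat \<Rightarrow> 'a::linorder"
  assumes "\<sigma> permutes {1..n}"
    and sorted: "\<And>i j. 1 \<le> i \<Longrightarrow> i \<le> j \<Longrightarrow> j \<le> n \<Longrightarrow> g (\<sigma> i) \<le> g (\<sigma> j)"
    and "k \<in> {1..n}" "k \<noteq> \<sigma> n"
  shows "g k \<le> g (\<sigma> (n - 1))"
proof -
  obtain i where i: "i \<in> {1..n}" "k = \<sigma> i"
    using permutes_image[OF assms(1)] \<open>k \<in> {1..n}\<close> by blast
  with \<open>k \<noteq> \<sigma> n\<close> have "i \<noteq> n" by auto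
  with i have "i \<le> n - 1" by auto
  with i sorted[of i "n - 1"] show ?thesis by auto
qed

lemma fif_graph_vertical_bound:
  fixes \<sigma> :: "nat \<Rightarrow> nat"
  assumes "n \<ge> 2"
    and xinc: "\<And>k. k < n \<Longrightarrow> x k < x (Suc k)"
    and drange: "\<And>k. k \<in> {1..n} \<Longrightarrow> 0 \<le> d k \<and> d k < 1"
    and fif: "is_affine_fif n x y d f"
    and perm: "\<sigma> permutes {1..n}"
    and sorted: "\<And>i j. 1 \<le> i \<Longrightarrow> i \<le> j \<Longrightarrow> j \<le> n \<Longrightarrow> fif_s x y d n (\<sigma> i) \<le> fif_s x y d n (\<sigma> j)"
    and t: "t \<in> {x 0..x n}"
  obtains k where "k \<in> {1..n}"
    and "\<bar>f t - fif_v x y d n k\<bar> \<le> fif_M x y d n * fif_s x y d n k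
      * (1 + (if k = \<sigma> n then fif_s x y d n (\<sigma> (n - 1)) else fif_s x y d n (\<sigma> n)))
      / (fif_theta x y d n * (1 - fif_s x y d n (\<sigma> (n - 1)) * fif_s x y d n (\<sigma> n)))"
proof -
  let ?\<theta> = "fif_theta x y d n" and ?s = "fif_s x y d n"
  interpret ifs_fixed_points "{1..n}" "fif_map x y d n" "{(t, f t) | t. t \<in> {x 0..x n}}"
    "fif_rho ?\<theta>" ?s "\<lambda>k. (fif_u x n k, fif_v x y d n k)" "fif_M x y d n"
    using fif_ifs_fixed_points[OF xinc \<open>n \<ge> 2\<close> drange fif] .
  have \<sigma>_in: "\<sigma> i \<in> {1..n}" if "i \<in> {1..n}" for i
    using permutes_in_image[OF perm] that by simp
  have s_bounds: "0 \<le> ?s k" "?s k < 1" if "k \<in> {1..n}" for k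
    using fif_s_bounds[where x = x and y = y and d = d and n = n, OF xinc \<open>n \<ge> 2\<close> drange that]
    by auto
  obtain k where k: "k \<in> {1..n}"
    and dist: "fif_rho ?\<theta> (t, f t) (fif_u x n k, fif_v x y d n k) \<le> ?s k * (fif_M x y d n
      * (1 + (if k = \<sigma> n then ?s (\<sigma> (n - 1)) else ?s (\<sigma> n)))
      / (1 - ?s (\<sigma> (n - 1)) * ?s (\<sigma> n)))"
  proof (rule covered_dist_fixed_point_bound)
    show "?s (\<sigma> (n - 1)) \<le> ?s (\<sigma> n)" using sorted[of "n - 1" n] \<open>n \<ge> 2\<close> by simp
    show "?s j \<le> ?s (\<sigma> (n - 1))" if "j \<in> {1..n}" "j \<noteq> \<sigma> n" for j
      using permutes_sorted_le_second_largest[where g = ?s, OF perm sorted that] .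
  qed (use t \<sigma>_in s_bounds \<open>n \<ge> 2\<close> in auto)
  let ?W = "1 + (if k = \<sigma> n then ?s (\<sigma> (n - 1)) else ?s (\<sigma> n))"
    and ?D = "1 - ?s (\<sigma> (n - 1)) * ?s (\<sigma> n)"
  have "\<bar>f t - fif_v x y d n k\<bar> * ?\<theta> \<le> fif_rho ?\<theta> (t, f t) (fif_u x n k, fif_v x y d n k)"
    unfolding fif_rho_def by simp
  also note dist
  also have "?s k * (fif_M x y d n * ?W / ?D) = fif_M x y d n * ?s k * ?W / ?D"
    by simp
  finally have "\<bar>f t - fif_v x y d n k\<bar> * ?\<theta> \<le> fif_M x y d n * ?s k * ?W / ?D" .
  moreover have "0 < ?\<theta>"
    using fif_theta_pos_contraction(1) fif_a_bounds(2)[where x = x and n = n, OF xinc \<open>n \<ge> 2\<close>]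
      \<open>n \<ge> 2\<close> by simp
  ultimately have "\<bar>f t - fif_v x y d n k\<bar> \<le> fif_M x y d n * ?s k * ?W / ?D / ?\<theta>"
    by (simp only: pos_le_divide_eq)
  also have "\<dots> = fif_M x y d n * ?s k * ?W / (?\<theta> * ?D)"
    by (simp only: divide_divide_eq_left mult.commute[of ?D])
  finally show ?thesis using k that by blast
qed

theorem corollary3p1:
  fixes n :: nat and x y d :: "nat \<Rightarrow> real" and f :: "real \<Rightarrow> real"
    and \<sigma> :: "nat \<Rightarrow> nat"
  assumes n2: "n \<ge> 2"
    and xinc: "\<And>k. k < n \<Longrightarrow> x k < x (Suc k)"
    and drange: "\<And>k. k \<in> {1..n} \<Longrightarrow> 0 \<le> d k \<and> d k < 1"
    and fif: "is_affine_fif n x y d f"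
    and perm: "\<sigma> permutes {1..n}"
    and sorted: "\<And>i j. 1 \<le> i \<Longrightarrow> i \<le> j \<Longrightarrow> j \<le> n \<Longrightarrow>
        max (fif_a x n (\<sigma> i) + fif_theta x y d n * \<bar>fif_c x y d n (\<sigma> i)\<bar>) (d (\<sigma> i))
        \<le> max (fif_a x n (\<sigma> j) + fif_theta x y d n * \<bar>fif_c x y d n (\<sigma> j)\<bar>) (d (\<sigma> j))"
  shows
    "let a = x 0; b = x n; \<theta> = fif_theta x y d n;
         u = (\<lambda>k. fif_b x n k / (1 - fif_a x n k));
         v = (\<lambda>k. fif_b x n k * fif_c x y d n k / ((1 - fif_a x n k) * (1 - d k))
                  + fif_e x y d n k / (1 - d k));
         s = (\<lambda>k. max (fif_a x n k + \<theta> * \<bar>fif_c x y d n k\<bar>) (d k));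
         M = Max ((\<lambda>(i, j). \<bar>u i - u j\<bar> + \<theta> * \<bar>v i - v j\<bar>) ` ({1..n} \<times> {1..n}));
         D = 1 - s (\<sigma> (n - 1)) * s (\<sigma> n);
         A = min (Min ((\<lambda>j. v (\<sigma> j) - M * s (\<sigma> j) * (1 + s (\<sigma> n)) / (\<theta> * D)) ` {1..n - 1}))
                 (v (\<sigma> n) - M * s (\<sigma> n) * (1 + s (\<sigma> (n - 1))) / (\<theta> * D));
         B = max (Max ((\<lambda>j. v (\<sigma> j) + M * s (\<sigma> j) * (1 + s (\<sigma> n)) / (\<theta> * D)) ` {1..n - 1}))
                 (v (\<sigma> n) + M * s (\<sigma> n) * (1 + s (\<sigma> (n - 1))) / (\<theta> * D))
     in {(t, f t) | t. t \<in> {a..b}} \<subseteq> {a..b} \<times> {A..B}"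
proof -
  let ?s = "fif_s x y d n" and ?v = "fif_v x y d n" and ?\<theta> = "fif_theta x y d n"
  define D where "D = 1 - ?s (\<sigma> (n - 1)) * ?s (\<sigma> n)"
  define r where "r k = fif_M x y d n * ?s k * (1 + ?s (\<sigma> n)) / (?\<theta> * D)" for k
  define r\<^sub>n where "r\<^sub>n = fif_M x y d n * ?s (\<sigma> n) * (1 + ?s (\<sigma> (n - 1))) / (?\<theta> * D)"
  define A where "A = min (Min ((\<lambda>j. ?v (\<sigma> j) - r (\<sigma> j)) ` {1..n - 1})) (?v (\<sigma> n) - r\<^sub>n)"
  define B where "B = max (Max ((\<lambda>j. ?v (\<sigma> j) + r (\<sigma> j)) ` {1..n - 1})) (?v (\<sigma> n) + r\<^sub>n)"
  have "f t \<in> {A..B}" if t: "t \<in> {x 0..x n}" for t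
  proof -
    obtain k where k: "k \<in> {1..n}" and "\<bar>f t - ?v k\<bar> \<le> fif_M x y d n * ?s k
        * (1 + (if k = \<sigma> n then ?s (\<sigma> (n - 1)) else ?s (\<sigma> n))) / (?\<theta> * D)"
      unfolding D_def by (rule fif_graph_vertical_bound[where x = x and y = y and d = d and f = f,
          OF n2 xinc drange fif perm sorted[folded fif_s_def] t])
    then have bound: "\<bar>f t - ?v k\<bar> \<le> (if k = \<sigma> n then r\<^sub>n else r k)"
      unfolding r_def r\<^sub>n_def by (cases "k = \<sigma> n") auto
    obtain j where j: "j \<in> {1..n}" "k = \<sigma> j"
      using permutes_image[OF perm] k by blast
    show ?thesis
    proof (cases "j = n")
      case False
      with j have j': "j \<in> {1..n - 1}" and "k \<noteq> \<sigma> n"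
        using permutes_inj[OF perm] by (auto dest: injD)
      with bound have "\<bar>f t - ?v k\<bar> \<le> r k" by simp
      moreover have "A \<le> ?v k - r k"
        unfolding A_def using j j' by (intro min.coboundedI1 Min_le) auto
      moreover have "?v k + r k \<le> B"
        unfolding B_def using j j' by (intro max.coboundedI1 Max_ge) auto
      ultimately show ?thesis by auto
    qed (use j bound in \<open>auto simp: A_def B_def\<close>)
  qed
  then show ?thesis
    unfolding Let_def fif_s_def[symmetric] fif_u_def[symmetric] fif_v_def[symmetric]
      fif_M_def[symmetric] D_def[symmetric] r_def[symmetric] r\<^sub>n_def[symmetric]
      A_def[symmetric] B_def[symmetric]
    by blast
qed

end
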